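(* Let $n \geq 2$, $N = \frac{n(n+1)}{2}$, and identify $\mathbb{C}^N$ with arrays $v = (v_{r,s})_{1 \leq s \leq r \leq n}$ of complex numbers. Let $\mathbb{C}^N_{\mathrm{std}}$ be the set of standard points and $\mathbb{Z}^N_0$ the set of integral vectors whose row-$n$ entries vanish (see context). Let $W \subset \mathbb{Z}^N_0$ be a nonempty finite set and put $$S_W = \bigcap_{w \in W} \left(\mathbb{C}^N_{\mathrm{std}} - w\right), \qquad \text{where } \mathbb{C}^N_{\mathrm{std}} - w = \{v - w \mid v \in \mathbb{C}^N_{\mathrm{std}}\}.$$ Let $F \in \mathbb{C}(\lambda_{r,s} \mid 1 \leq s \leq r \leq n)$ be a rational function that has no poles in $S_W$. If $F(v) = 0$ for all $v \in S_W$, then $F = 0$.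
   Context: Coordinates on $\mathbb{C}^N$ are the variables $\lambda_{r,s}$, $1 \leq s \leq r \leq n$, so that $\lambda_{r,s}(v) = v_{r,s}$; rational functions on $\mathbb{C}^N$ are elements of the field $\mathbb{C}(\lambda_{r,s} \mid 1 \leq s \leq r \leq n)$. A point $v \in \mathbb{C}^N$ is called standard if for all $1 \leq i < k \leq n$ one has $v_{k,i} - v_{k-1,i} \in \mathbb{Z}_{\geq 0}$ and $v_{k-1,i} - v_{k,i+1} \in \mathbb{Z}_{>0}$; $\mathbb{C}^N_{\mathrm{std}}$ denotes the set of standard points. $\mathbb{Z}^N_0$ denotes the set of $z \in \mathbb{Z}^N$ with $z_{n,s} = 0$ for all $1 \leq s \leq n$. *)

theory Defs
  imports "HOL-Analysis.Analysis" "HOL-Library.Poly_Mapping"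
begin

definition idx :: "nat \<Rightarrow> (nat \<times> nat) set" where
  "idx n = {(r, s). 1 \<le> s \<and> s \<le> r \<and> r \<le> n}"

text \<open>Points of C^N: arrays indexed by idx n (zero outside the index set).\<close>
definition pts :: "nat \<Rightarrow> (nat \<times> nat \<Rightarrow> complex) set" where
  "pts n = {v. \<forall>p. p \<notin> idx n \<longrightarrow> v p = 0}"

definition std_pts :: "nat \<Rightarrow> (nat \<times> nat \<Rightarrow> complex) set" where
  "std_pts n = {v \<in> pts n. \<forall>i k. 1 \<le> i \<and> i < k \<and> k \<le> n \<longrightarrow>
      (\<exists>m::nat. v (k, i) - v (k - 1, i) = of_nat m) \<and>
      (\<exists>m::nat. 0 < m \<and> v (k - 1, i) - v (k, i + 1) = of_nat m)}"

definition Z0 :: "nat \<Rightarrow> (nat \<times> nat \<Rightarrow> int) set" where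
  "Z0 n = {z. (\<forall>p. p \<notin> idx n \<longrightarrow> z p = 0) \<and> (\<forall>s. z (n, s) = 0)}"

definition std_shift :: "nat \<Rightarrow> (nat \<times> nat \<Rightarrow> int) \<Rightarrow> (nat \<times> nat \<Rightarrow> complex) set" where
  "std_shift n w = (\<lambda>v. (\<lambda>p. v p - of_int (w p))) ` std_pts n"

definition S_W :: "nat \<Rightarrow> (nat \<times> nat \<Rightarrow> int) set \<Rightarrow> (nat \<times> nat \<Rightarrow> complex) set" where
  "S_W n W = (\<Inter>w\<in>W. std_shift n w)"

text \<open>Multivariate polynomials over C in the variables lambda_{r,s}: finitely supported
  maps from monomials (exponent vectors) to coefficients; multiplication is the
  library's convolution product.\<close>
type_synonym mpoly = "((nat \<times> nat) \<Rightarrow>\<^sub>0 nat) \<Rightarrow>\<^sub>0 complex"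

definition mpoly_in_vars :: "nat \<Rightarrow> mpoly \<Rightarrow> bool" where
  "mpoly_in_vars n P = (\<forall>m \<in> Poly_Mapping.keys P. Poly_Mapping.keys m \<subseteq> idx n)"

definition mpeval :: "mpoly \<Rightarrow> (nat \<times> nat \<Rightarrow> complex) \<Rightarrow> complex" where
  "mpeval P v = (\<Sum>m \<in> Poly_Mapping.keys P.
      Poly_Mapping.lookup P m * (\<Prod>i \<in> Poly_Mapping.keys m. v i ^ Poly_Mapping.lookup m i))"

text \<open>A rational function is represented by a fraction P/Q with Q \<noteq> 0; two fractions
  represent the same rational function iff P*Q' = P'*Q.  F = P/Q has no pole at v iff
  it admits a representation P'/Q' with Q'(v) \<noteq> 0; then F(v) = P'(v)/Q'(v).\<close>
definition same_ratfun :: "mpoly \<Rightarrow> mpoly \<Rightarrow> mpoly \<Rightarrow> mpoly \<Rightarrow> bool" where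
  "same_ratfun P Q P' Q' = (Q' \<noteq> 0 \<and> P * Q' = P' * Q)"

definition no_pole_at :: "nat \<Rightarrow> mpoly \<Rightarrow> mpoly \<Rightarrow> (nat \<times> nat \<Rightarrow> complex) \<Rightarrow> bool" where
  "no_pole_at n P Q v = (\<exists>P' Q'. mpoly_in_vars n P' \<and> mpoly_in_vars n Q' \<and>
      same_ratfun P Q P' Q' \<and> mpeval Q' v \<noteq> 0)"

definition ratfun_val_zero :: "nat \<Rightarrow> mpoly \<Rightarrow> mpoly \<Rightarrow> (nat \<times> nat \<Rightarrow> complex) \<Rightarrow> bool" where
  "ratfun_val_zero n P Q v = (\<exists>P' Q'. mpoly_in_vars n P' \<and> mpoly_in_vars n Q' \<and>
      same_ratfun P Q P' Q' \<and> mpeval Q' v \<noteq> 0 \<and> mpeval P' v = 0)"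

end

theory Submission
  imports Defs "HOL-Computational_Algebra.Polynomial"
begin

text \<open>Since \<open>F = P/Q\<close> is represented at each \<open>v \<in> S_W\<close> by some \<open>P'/Q'\<close> with \<open>P Q' = P' Q\<close>
  and \<open>Q'(v) \<noteq> 0\<close>, the numerator \<open>P\<close> vanishes on \<open>S_W\<close>; it remains to see that \<open>S_W\<close> is
  Zariski dense. Choose a weight \<open>\<rho>\<close> on the coordinates that increases along the interlacing
  chains \<open>v(k-1,i) < v(k,i)\<close> and \<open>v(k,i+1) < v(k-1,i)\<close> defining standard points, and put
  \<open>v(p) = t ^ D ^ \<rho>(p)\<close>. For large \<open>t\<close> all gaps between neighbouring entries exceed twice the
  shifts by \<open>W\<close>, so \<open>v \<in> S_W\<close>. On these points \<open>P\<close> becomes a univariate polynomial in \<open>t\<close>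
  (Kronecker substitution) whose coefficients are those of \<open>P\<close>, because \<open>D\<close> exceeds every
  exponent and base-\<open>D\<close> expansions are unique; having infinitely many roots, it is zero.\<close>

definition monom_eval :: "((nat \<times> nat) \<Rightarrow>\<^sub>0 nat) \<Rightarrow> (nat \<times> nat \<Rightarrow> complex) \<Rightarrow> complex" where
  "monom_eval m v = (\<Prod>i \<in> Poly_Mapping.keys m. v i ^ Poly_Mapping.lookup m i)"

lemma monom_eval_superset:
  "finite S \<Longrightarrow> Poly_Mapping.keys m \<subseteq> S \<Longrightarrow>
    monom_eval m v = (\<Prod>i \<in> S. v i ^ Poly_Mapping.lookup m i)"
  unfolding monom_eval_def by (rule prod.mono_neutral_left) (auto simp: in_keys_iff)

lemma monom_eval_add: "monom_eval (m + m') v = monom_eval m v * monom_eval m' v"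
proof -
  let ?S = "Poly_Mapping.keys m \<union> Poly_Mapping.keys m'"
  have "monom_eval (m + m') v = (\<Prod>i \<in> ?S. v i ^ Poly_Mapping.lookup (m + m') i)"
    by (rule monom_eval_superset) (auto simp: in_keys_iff lookup_add)
  also have "\<dots> = (\<Prod>i \<in> ?S. v i ^ Poly_Mapping.lookup m i) * (\<Prod>i \<in> ?S. v i ^ Poly_Mapping.lookup m' i)"
    by (simp add: lookup_add power_add prod.distrib)
  also have "\<dots> = monom_eval m v * monom_eval m' v"
    using monom_eval_superset[of ?S m v] monom_eval_superset[of ?S m' v] by simp
  finally show ?thesis .
qed

lemma mpeval_superset:
  "finite S \<Longrightarrow> Poly_Mapping.keys P \<subseteq> S \<Longrightarrow>
    mpeval P v = (\<Sum>m \<in> S. Poly_Mapping.lookup P m * monom_eval m v)"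
  unfolding mpeval_def monom_eval_def[symmetric]
  by (rule sum.mono_neutral_left) (auto simp: in_keys_iff)

lemma mpeval_add: "mpeval (P + Q) v = mpeval P v + mpeval Q v"
proof -
  let ?S = "Poly_Mapping.keys P \<union> Poly_Mapping.keys Q"
  have "mpeval (P + Q) v = (\<Sum>m \<in> ?S. Poly_Mapping.lookup (P + Q) m * monom_eval m v)"
    by (rule mpeval_superset) (auto simp: in_keys_iff lookup_add)
  also have "\<dots> = (\<Sum>m \<in> ?S. Poly_Mapping.lookup P m * monom_eval m v)
      + (\<Sum>m \<in> ?S. Poly_Mapping.lookup Q m * monom_eval m v)"
    by (simp add: lookup_add distrib_right sum.distrib)
  also have "\<dots> = mpeval P v + mpeval Q v"
    using mpeval_superset[of ?S P v] mpeval_superset[of ?S Q v] by simp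
  finally show ?thesis .
qed

lemma mpeval_sum: "finite A \<Longrightarrow> mpeval (\<Sum>a\<in>A. f a) v = (\<Sum>a\<in>A. mpeval (f a) v)"
  by (induction A rule: finite_induct) (simp_all add: mpeval_add, simp add: mpeval_def)

lemma mpeval_single: "mpeval (Poly_Mapping.single m c) v = c * monom_eval m v"
  by (simp add: mpeval_def monom_eval_def)

lemma mpoly_sum_single_lookup:
  "(P :: mpoly) = (\<Sum>m \<in> Poly_Mapping.keys P. Poly_Mapping.single m (Poly_Mapping.lookup P m))"
  by (rule poly_mapping_eqI) (simp add: lookup_sum lookup_single when_def in_keys_iff)

lemma mpeval_mult: "mpeval ((P :: mpoly) * Q) v = mpeval P v * mpeval Q v"
proof -
  let ?A = "Poly_Mapping.keys P" and ?B = "Poly_Mapping.keys Q"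
  have "P * Q = (\<Sum>m \<in> ?A. Poly_Mapping.single m (Poly_Mapping.lookup P m)) *
      (\<Sum>m \<in> ?B. Poly_Mapping.single m (Poly_Mapping.lookup Q m))"
    using mpoly_sum_single_lookup[of P] mpoly_sum_single_lookup[of Q] by simp
  also have "\<dots> = (\<Sum>m \<in> ?A. \<Sum>m' \<in> ?B.
      Poly_Mapping.single (m + m') (Poly_Mapping.lookup P m * Poly_Mapping.lookup Q m'))"
    by (simp add: sum_product mult_single)
  finally have "mpeval (P * Q) v = (\<Sum>m \<in> ?A. \<Sum>m' \<in> ?B.
      (Poly_Mapping.lookup P m * Poly_Mapping.lookup Q m') * monom_eval (m + m') v)"
    by (simp add: mpeval_sum mpeval_single)
  also have "\<dots> = (\<Sum>m \<in> ?A. Poly_Mapping.lookup P m * monom_eval m v) *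
      (\<Sum>m' \<in> ?B. Poly_Mapping.lookup Q m' * monom_eval m' v)"
    by (simp add: sum_product monom_eval_add mult_ac)
  also have "\<dots> = mpeval P v * mpeval Q v"
    by (simp add: mpeval_def monom_eval_def)
  finally show ?thesis .
qed

lemma base_expansion_unique:
  fixes f g :: "nat \<Rightarrow> nat"
  assumes "\<forall>j<K. f j < D" "\<forall>j<K. g j < D"
    and "(\<Sum>j<K. f j * D ^ j) = (\<Sum>j<K. g j * D ^ j)" and "j < K"
  shows "f j = g j"
  using assms
proof (induction K arbitrary: f g j)
  case 0
  then show ?case by simp
next
  case (Suc K)
  have split: "(\<Sum>j<Suc K. h j * D ^ j) = h 0 + D * (\<Sum>j<K. h (Suc j) * D ^ j)" for h :: "nat \<Rightarrow> nat"
    unfolding sum.lessThan_Suc_shift by (simp add: sum_distrib_left mult_ac)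
  have low: "f 0 < D" "g 0 < D" using Suc.prems by auto
  have "(f 0 + D * (\<Sum>j<K. f (Suc j) * D ^ j)) mod D = (g 0 + D * (\<Sum>j<K. g (Suc j) * D ^ j)) mod D"
    using Suc.prems(3) split[of f] split[of g] by simp
  hence head: "f 0 = g 0" using low by simp
  hence "D * (\<Sum>j<K. f (Suc j) * D ^ j) = D * (\<Sum>j<K. g (Suc j) * D ^ j)"
    using Suc.prems(3) split[of f] split[of g] by simp
  hence tail: "(\<Sum>j<K. f (Suc j) * D ^ j) = (\<Sum>j<K. g (Suc j) * D ^ j)"
    using low by simp
  show ?case
  proof (cases j)
    case 0
    then show ?thesis using head by simp
  next
    case (Suc j')
    then show ?thesis
      using Suc.IH[of "\<lambda>j. f (Suc j)" "\<lambda>j. g (Suc j)" j'] Suc.prems tail by auto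
  qed
qed

definition kronecker_degree ::
    "nat \<Rightarrow> (nat \<times> nat \<Rightarrow> nat) \<Rightarrow> ((nat \<times> nat) \<Rightarrow>\<^sub>0 nat) \<Rightarrow> nat" where
  "kronecker_degree D \<rho> m = (\<Sum>p \<in> Poly_Mapping.keys m. Poly_Mapping.lookup m p * D ^ \<rho> p)"

lemma kronecker_degree_inj:
  assumes I: "finite I" "inj_on \<rho> I"
    and keys: "Poly_Mapping.keys m1 \<subseteq> I" "Poly_Mapping.keys m2 \<subseteq> I"
    and bounded: "\<forall>p. Poly_Mapping.lookup m1 p < D" "\<forall>p. Poly_Mapping.lookup m2 p < D"
    and eq: "kronecker_degree D \<rho> m1 = kronecker_degree D \<rho> m2"
  shows "m1 = m2"
proof (rule poly_mapping_eqI)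
  define K where "K = Suc (Max (\<rho> ` I))"
  have below_K: "\<rho> p < K" if "p \<in> I" for p
    using I that by (auto simp: K_def le_imp_less_Suc)
  define digit :: "((nat \<times> nat) \<Rightarrow>\<^sub>0 nat) \<Rightarrow> nat \<Rightarrow> nat" where "digit m j =
      (if j \<in> \<rho> ` I then Poly_Mapping.lookup m (inv_into I \<rho> j) else 0)" for m j
  have expansion: "kronecker_degree D \<rho> m = (\<Sum>j<K. digit m j * D ^ j)"
    if "Poly_Mapping.keys m \<subseteq> I" for m
  proof -
    have "kronecker_degree D \<rho> m = (\<Sum>p \<in> I. Poly_Mapping.lookup m p * D ^ \<rho> p)"
      unfolding kronecker_degree_def using that I
      by (intro sum.mono_neutral_left) (auto simp: in_keys_iff)
    also have "\<dots> = (\<Sum>p \<in> I. digit m (\<rho> p) * D ^ \<rho> p)"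
      by (intro sum.cong) (auto simp: digit_def inv_into_f_f[OF I(2)])
    also have "\<dots> = (\<Sum>j \<in> \<rho> ` I. digit m j * D ^ j)"
      by (simp add: sum.reindex[OF I(2)])
    also have "\<dots> = (\<Sum>j<K. digit m j * D ^ j)"
      by (intro sum.mono_neutral_left) (auto simp: digit_def below_K)
    finally show ?thesis .
  qed
  have digit_bounded: "\<forall>j<K. digit m j < D" if bound: "\<forall>p. Poly_Mapping.lookup m p < D" for m
  proof (intro allI impI)
    fix j
    have "0 < D" using bound[rule_format, of undefined] by simp
    then show "digit m j < D"
      using bound[rule_format, of "inv_into I \<rho> j"] unfolding digit_def by simp
  qed
  fix p
  show "Poly_Mapping.lookup m1 p = Poly_Mapping.lookup m2 p"
  proof (cases "p \<in> I")
    case True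
    have "digit m1 (\<rho> p) = digit m2 (\<rho> p)"
      using base_expansion_unique[OF digit_bounded[OF bounded(1)] digit_bounded[OF bounded(2)]]
        eq expansion[OF keys(1)] expansion[OF keys(2)] below_K[OF True] by simp
    then show ?thesis using True by (simp add: digit_def inv_into_f_f[OF I(2)])
  next
    case False
    then have "p \<notin> Poly_Mapping.keys m1" "p \<notin> Poly_Mapping.keys m2" using keys by auto
    then show ?thesis by (simp add: in_keys_iff)
  qed
qed

definition kronecker_poly :: "nat \<Rightarrow> (nat \<times> nat \<Rightarrow> nat) \<Rightarrow> mpoly \<Rightarrow> complex poly" where
  "kronecker_poly D \<rho> P =
    (\<Sum>m \<in> Poly_Mapping.keys P. monom (Poly_Mapping.lookup P m) (kronecker_degree D \<rho> m))"

lemma poly_kronecker_poly: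
  assumes "\<forall>m \<in> Poly_Mapping.keys P. Poly_Mapping.keys m \<subseteq> I"
    and "\<forall>p \<in> I. v p = of_nat t ^ (D ^ \<rho> p)"
  shows "poly (kronecker_poly D \<rho> P) (of_nat t) = mpeval P v"
proof -
  have "monom_eval m v = of_nat t ^ kronecker_degree D \<rho> m" if "m \<in> Poly_Mapping.keys P" for m
  proof -
    have "monom_eval m v =
        (\<Prod>p \<in> Poly_Mapping.keys m. (of_nat t :: complex) ^ (Poly_Mapping.lookup m p * D ^ \<rho> p))"
      unfolding monom_eval_def using assms that
      by (intro prod.cong) (auto simp: power_mult[symmetric] mult.commute subset_iff)
    also have "\<dots> = of_nat t ^ kronecker_degree D \<rho> m"
      by (simp add: kronecker_degree_def power_sum)
    finally show ?thesis .
  qed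
  then show ?thesis
    by (simp add: kronecker_poly_def mpeval_def poly_sum poly_monom monom_eval_def[symmetric]
        cong: sum.cong)
qed

lemma coeff_kronecker_poly:
  assumes I: "finite I" "inj_on \<rho> I"
    and keys: "\<forall>m \<in> Poly_Mapping.keys P. Poly_Mapping.keys m \<subseteq> I"
    and bounded: "\<forall>m \<in> Poly_Mapping.keys P. \<forall>p. Poly_Mapping.lookup m p < D"
    and m0: "m0 \<in> Poly_Mapping.keys P"
  shows "coeff (kronecker_poly D \<rho> P) (kronecker_degree D \<rho> m0) = Poly_Mapping.lookup P m0"
proof -
  have "kronecker_degree D \<rho> m = kronecker_degree D \<rho> m0 \<longleftrightarrow> m = m0"
    if "m \<in> Poly_Mapping.keys P" for m
    using kronecker_degree_inj[OF I, of m m0 D] keys bounded m0 that by auto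
  then have "coeff (kronecker_poly D \<rho> P) (kronecker_degree D \<rho> m0) =
      (\<Sum>m \<in> Poly_Mapping.keys P. if m = m0 then Poly_Mapping.lookup P m else 0)"
    unfolding kronecker_poly_def coeff_sum coeff_monom by (intro sum.cong) auto
  also have "\<dots> = Poly_Mapping.lookup P m0" using m0 by simp
  finally show ?thesis .
qed

lemma mpoly_eq_0_if_vanishes_on_kronecker_points:
  assumes I: "finite I" "inj_on \<rho> I"
    and keys: "\<forall>m \<in> Poly_Mapping.keys P. Poly_Mapping.keys m \<subseteq> I"
    and bounded: "\<forall>m \<in> Poly_Mapping.keys P. \<forall>p. Poly_Mapping.lookup m p < D"
    and points: "\<And>t p. p \<in> I \<Longrightarrow> v t p = of_nat t ^ (D ^ \<rho> p)"
    and vanishes: "\<And>t. t \<ge> T \<Longrightarrow> mpeval P (v t) = 0"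
  shows "P = 0"
proof (rule ccontr)
  assume "P \<noteq> 0"
  then obtain m0 where m0: "m0 \<in> Poly_Mapping.keys P"
    using keys_eq_empty by blast
  have "poly (kronecker_poly D \<rho> P) (of_nat t) = 0" if "t \<ge> T" for t
    using poly_kronecker_poly[OF keys, of "v t" t] points vanishes[OF that] by simp
  then have "of_nat ` {T..} \<subseteq> {x. poly (kronecker_poly D \<rho> P) x = 0}"
    by auto
  moreover have "infinite (of_nat ` {T..} :: complex set)"
    using finite_imageD[of "of_nat :: nat \<Rightarrow> complex" "{T..}"] infinite_Ici[of T]
    by (auto intro: inj_onI)
  ultimately have "kronecker_poly D \<rho> P = 0"
    using poly_roots_finite finite_subset by blast
  then have "Poly_Mapping.lookup P m0 = 0"
    using coeff_kronecker_poly[OF I keys bounded m0] by simp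
  with m0 show False by (simp add: in_keys_iff)
qed

lemma mpoly_exponents_bounded:
  "\<exists>D \<ge> 2. \<forall>m \<in> Poly_Mapping.keys (P :: mpoly). \<forall>p. Poly_Mapping.lookup m p < D"
proof (intro exI conjI ballI allI)
  define D where "D = 2 + (\<Sum>m \<in> Poly_Mapping.keys P. \<Sum>i \<in> Poly_Mapping.keys m. Poly_Mapping.lookup m i)"
  show "D \<ge> 2" by (simp add: D_def)
  fix m p assume m: "m \<in> Poly_Mapping.keys P"
  show "Poly_Mapping.lookup m p < D"
  proof (cases "p \<in> Poly_Mapping.keys m")
    case True
    have "Poly_Mapping.lookup m p \<le> (\<Sum>i \<in> Poly_Mapping.keys m. Poly_Mapping.lookup m i)"
      using True by (intro member_le_sum) auto
    also have "\<dots> \<le> (\<Sum>m \<in> Poly_Mapping.keys P. \<Sum>i \<in> Poly_Mapping.keys m. Poly_Mapping.lookup m i)"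
      using m by (intro member_le_sum) auto
    finally show ?thesis by (simp add: D_def)
  qed (simp add: D_def in_keys_iff)
qed

lemma finite_idx: "finite (idx n)"
  by (rule finite_subset[of _ "{0..n} \<times> {0..n}"]) (auto simp: idx_def)

lemma Z0_bounded:
  assumes "W \<subseteq> Z0 n" "finite W"
  shows "\<exists>B \<ge> 0. \<forall>w \<in> W. \<forall>p. \<bar>w p\<bar> \<le> B"
proof (intro exI conjI ballI allI)
  define B where "B = (\<Sum>w \<in> W. \<Sum>p \<in> idx n. \<bar>w p\<bar>)"
  show "B \<ge> 0" unfolding B_def by (intro sum_nonneg) auto
  fix w p assume w: "w \<in> W"
  show "\<bar>w p\<bar> \<le> B"
  proof (cases "p \<in> idx n")
    case True
    have "\<bar>w p\<bar> \<le> (\<Sum>p \<in> idx n. \<bar>w p\<bar>)"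
      using True finite_idx by (intro member_le_sum) auto
    also have "\<dots> \<le> B"
      unfolding B_def using w assms by (intro member_le_sum) (auto intro: sum_nonneg)
    finally show ?thesis .
  next
    case False
    then have "w p = 0" using w assms by (cases p) (auto simp: Z0_def)
    with \<open>B \<ge> 0\<close> show ?thesis by simp
  qed
qed

lemma std_pts_of_int:
  fixes a :: "nat \<times> nat \<Rightarrow> int"
  assumes "\<forall>p. p \<notin> idx n \<longrightarrow> a p = 0"
    and "\<forall>i k. 1 \<le> i \<and> i < k \<and> k \<le> n \<longrightarrow> a (k - 1, i) \<le> a (k, i) \<and> a (k, i + 1) < a (k - 1, i)"
  shows "(\<lambda>p. of_int (a p)) \<in> std_pts n"
  unfolding std_pts_def
proof (intro CollectI conjI allI impI)
  show "(\<lambda>p. of_int (a p)) \<in> pts n"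
    using assms(1) by (simp add: pts_def)
next
  fix i k assume ik: "1 \<le> i \<and> i < k \<and> k \<le> n"
  let ?d1 = "a (k, i) - a (k - 1, i)" and ?d2 = "a (k - 1, i) - a (k, i + 1)"
  have d1: "?d1 \<ge> 0" and d2: "?d2 > 0" using assms(2) ik by auto
  have "of_int (a (k, i)) - of_int (a (k - 1, i)) = (of_nat (nat ?d1) :: complex)"
    using d1 by simp
  then show "\<exists>m. of_int (a (k, i)) - of_int (a (k - 1, i)) = (of_nat m :: complex)" ..
  have "of_int (a (k - 1, i)) - of_int (a (k, i + 1)) = (of_nat (nat ?d2) :: complex)"
    using d2 by simp
  then show "\<exists>m>0. of_int (a (k - 1, i)) - of_int (a (k, i + 1)) = (of_nat m :: complex)"
    using d2 by (intro exI[of _ "nat ?d2"]) simp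
qed

lemma of_int_in_S_W_if_large_gaps:
  fixes a :: "nat \<times> nat \<Rightarrow> int"
  assumes W: "W \<subseteq> Z0 n" "\<forall>w \<in> W. \<forall>p. \<bar>w p\<bar> \<le> B"
    and support: "\<forall>p. p \<notin> idx n \<longrightarrow> a p = 0"
    and gaps: "\<forall>i k. 1 \<le> i \<and> i < k \<and> k \<le> n \<longrightarrow>
      a (k - 1, i) + 2 * B \<le> a (k, i) \<and> a (k, i + 1) + 2 * B < a (k - 1, i)"
  shows "(\<lambda>p. of_int (a p)) \<in> S_W n W"
  unfolding S_W_def
proof
  fix w assume w: "w \<in> W"
  have "(\<lambda>p. of_int (a p + w p)) \<in> std_pts n"
  proof (rule std_pts_of_int)
    show "\<forall>p. p \<notin> idx n \<longrightarrow> a p + w p = 0"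
      using support w W(1) by (auto simp: Z0_def)
    show "\<forall>i k. 1 \<le> i \<and> i < k \<and> k \<le> n \<longrightarrow>
        a (k - 1, i) + w (k - 1, i) \<le> a (k, i) + w (k, i) \<and>
        a (k, i + 1) + w (k, i + 1) < a (k - 1, i) + w (k - 1, i)"
    proof (intro allI impI)
      fix i k assume "1 \<le> i \<and> i < k \<and> k \<le> n"
      moreover have "\<bar>w (k - 1, i)\<bar> \<le> B" "\<bar>w (k, i)\<bar> \<le> B" "\<bar>w (k, i + 1)\<bar> \<le> B"
        using W(2) w by blast+
      ultimately show "a (k - 1, i) + w (k - 1, i) \<le> a (k, i) + w (k, i) \<and>
          a (k, i + 1) + w (k, i + 1) < a (k - 1, i) + w (k - 1, i)"
        using gaps by fastforce
    qed
  qed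
  then show "(\<lambda>p. of_int (a p)) \<in> std_shift n w"
    unfolding std_shift_def by (rule rev_image_eqI) simp
qed

lemma power_gap:
  fixes t :: nat
  assumes "1 \<le> t" "e1 < e2"
  shows "t ^ e1 + t \<le> t ^ e2 + 1"
proof -
  have "t ^ Suc e1 \<le> t ^ e2" using assms by (intro power_increasing) auto
  moreover have "t ^ e1 + t \<le> t * t ^ e1 + 1"
    using assms(1) one_le_power[of t e1]
    by (cases t; cases "t ^ e1") (auto simp del: one_le_power)
  ultimately show ?thesis by simp
qed

lemma power_point_in_S_W:
  assumes W: "W \<subseteq> Z0 n" "\<forall>w \<in> W. \<forall>p. \<bar>w p\<bar> \<le> B" "0 \<le> B"
    and t: "int t \<ge> 2 * B + 2"
    and e_mono: "\<forall>i k. 1 \<le> i \<and> i < k \<and> k \<le> n \<longrightarrow>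
      e (k - 1, i) < e (k, i) \<and> e (k, i + 1) < e (k - 1, i)"
  shows "(\<lambda>p. if p \<in> idx n then of_nat t ^ e p else 0) \<in> S_W n W"
proof -
  define a where "a p = (if p \<in> idx n then int t ^ e p else 0)" for p
  have gap: "int t ^ e1 + 2 * B < int t ^ e2" if "e1 < e2" for e1 e2
  proof -
    have "t ^ e1 + t \<le> t ^ e2 + 1" using power_gap[OF _ that, of t] t W(3) by simp
    then have "int t ^ e1 + int t \<le> int t ^ e2 + 1" by (simp flip: of_nat_power)
    with t show ?thesis by linarith
  qed
  have "(\<lambda>p. of_int (a p)) \<in> S_W n W"
  proof (rule of_int_in_S_W_if_large_gaps[OF W(1,2)])
    show "\<forall>p. p \<notin> idx n \<longrightarrow> a p = 0" by (simp add: a_def)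
    show "\<forall>i k. 1 \<le> i \<and> i < k \<and> k \<le> n \<longrightarrow>
        a (k - 1, i) + 2 * B \<le> a (k, i) \<and> a (k, i + 1) + 2 * B < a (k - 1, i)"
    proof (intro allI impI)
      fix i k assume ik: "1 \<le> i \<and> i < k \<and> k \<le> n"
      then have "(k, i) \<in> idx n" "(k - 1, i) \<in> idx n" "(k, i + 1) \<in> idx n"
        by (auto simp: idx_def)
      with gap e_mono ik show "a (k - 1, i) + 2 * B \<le> a (k, i) \<and> a (k, i + 1) + 2 * B < a (k - 1, i)"
        by (auto simp: a_def intro: less_imp_le)
    qed
  qed
  moreover have "(\<lambda>p. of_int (a p)) = (\<lambda>p. if p \<in> idx n then of_nat t ^ e p else (0 :: complex))"
    by (auto simp: a_def)
  ultimately show ?thesis by simp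
qed

text \<open>Lexicographic in \<open>(r - 2 s, r)\<close>; the offset \<open>2 n\<close> keeps the first key natural.\<close>
definition staircase_weight :: "nat \<Rightarrow> nat \<times> nat \<Rightarrow> nat" where
  "staircase_weight n p = (fst p + 2 * (n - snd p)) * (n + 1) + fst p"

lemma staircase_weight_inj: "inj_on (staircase_weight n) (idx n)"
proof (rule inj_onI)
  fix p q assume "p \<in> idx n" "q \<in> idx n" and eq: "staircase_weight n p = staircase_weight n q"
  then obtain r s r' s' where pq: "p = (r, s)" "q = (r', s')"
    and le: "r \<le> n" "r' \<le> n" "s \<le> n" "s' \<le> n"
    by (auto simp: idx_def)
  have digits: "(c * (n + 1) + x) mod (n + 1) = x" "(c * (n + 1) + x) div (n + 1) = c"
    if "x \<le> n" for c x :: nat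
    using that by (simp_all only: mod_mult_self3 div_mult_self3 mod_less div_less)
  have weight: "staircase_weight n (x, y) = (x + 2 * (n - y)) * (n + 1) + x" for x y
    by (simp add: staircase_weight_def)
  have "r = r'"
    using eq digits(1)[OF le(1)] digits(1)[OF le(2)] unfolding pq weight by metis
  moreover have "r + 2 * (n - s) = r' + 2 * (n - s')"
    using eq digits(2)[OF le(1)] digits(2)[OF le(2)] unfolding pq weight by metis
  ultimately show "p = q" using pq le by simp
qed

lemma staircase_weight_mono:
  assumes "1 \<le> i" "i < k" "k \<le> n"
  shows "staircase_weight n (k - 1, i) < staircase_weight n (k, i)"
    and "staircase_weight n (k, i + 1) < staircase_weight n (k - 1, i)"
proof -
  have weight: "staircase_weight n (x, y) = (x + 2 * (n - y)) * (n + 1) + x" for x y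
    by (simp add: staircase_weight_def)
  define c where "c = k - 1 + 2 * (n - i)"
  have "k + 2 * (n - i) = c + 1" using assms by (simp add: c_def)
  then show "staircase_weight n (k - 1, i) < staircase_weight n (k, i)"
    unfolding weight c_def[symmetric] by (simp add: algebra_simps)
  define d where "d = k + 2 * (n - (i + 1))"
  have "k - 1 + 2 * (n - i) = d + 1" using assms by (simp add: d_def)
  then show "staircase_weight n (k, i + 1) < staircase_weight n (k - 1, i)"
    unfolding weight d_def[symmetric] using assms by (simp add: algebra_simps)
qed

lemma mpoly_eq_0_if_vanishes_on_S_W:
  assumes W: "W \<subseteq> Z0 n" "finite W"
    and vars: "mpoly_in_vars n P"
    and vanishes: "\<forall>v \<in> S_W n W. mpeval P v = 0"
  shows "P = 0"
proof -
  obtain B where B: "B \<ge> 0" "\<forall>w \<in> W. \<forall>p. \<bar>w p\<bar> \<le> B"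
    using Z0_bounded[OF W] by blast
  obtain D where D: "D \<ge> 2" "\<forall>m \<in> Poly_Mapping.keys P. \<forall>p. Poly_Mapping.lookup m p < D"
    using mpoly_exponents_bounded by blast
  define v :: "nat \<Rightarrow> nat \<times> nat \<Rightarrow> complex"
    where "v t p = (if p \<in> idx n then of_nat t ^ (D ^ staircase_weight n p) else 0)" for t p
  have "v t \<in> S_W n W" if "t \<ge> nat (2 * B + 2)" for t
    unfolding v_def
  proof (rule power_point_in_S_W[OF W(1) B(2,1)])
    show "int t \<ge> 2 * B + 2" using that by linarith
    show "\<forall>i k. 1 \<le> i \<and> i < k \<and> k \<le> n \<longrightarrow>
        D ^ staircase_weight n (k - 1, i) < D ^ staircase_weight n (k, i) \<and>
        D ^ staircase_weight n (k, i + 1) < D ^ staircase_weight n (k - 1, i)"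
      using staircase_weight_mono D(1) by (auto intro: power_strict_increasing)
  qed
  with vanishes show ?thesis
    using mpoly_eq_0_if_vanishes_on_kronecker_points[OF finite_idx staircase_weight_inj _ D(2),
        where v = v and T = "nat (2 * B + 2)"] vars
    by (auto simp: v_def mpoly_in_vars_def)
qed

lemma mpeval_eq_0_if_ratfun_val_zero:
  assumes "ratfun_val_zero n P Q v"
  shows "mpeval P v = 0"
proof -
  obtain P' Q' where "P * Q' = P' * Q" "mpeval Q' v \<noteq> 0" "mpeval P' v = 0"
    using assms by (auto simp: ratfun_val_zero_def same_ratfun_def)
  then show ?thesis by (metis mpeval_mult mult_eq_0_iff mult_zero_left)
qed

theorem mainTheorem1:
  fixes n :: nat and W :: "(nat \<times> nat \<Rightarrow> int) set" and P Q :: mpoly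
  assumes "n \<ge> 2"
    and "W \<subseteq> Z0 n" and "finite W" and "W \<noteq> {}"
    and "mpoly_in_vars n P" and "mpoly_in_vars n Q" and "Q \<noteq> 0"
    and "\<forall>v \<in> S_W n W. no_pole_at n P Q v"
    and "\<forall>v \<in> S_W n W. ratfun_val_zero n P Q v"
  shows "P = 0"
  \<comment> \<open>\<open>ratfun_val_zero\<close> already supplies a pole-free representation at each point.\<close>
  using mpoly_eq_0_if_vanishes_on_S_W[OF assms(2,3,5)] assms(9) mpeval_eq_0_if_ratfun_val_zero
  by blast

end
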